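(* Let $\Gamma$ be a countable discrete group and $\mu$ a symmetric, generating probability measure on $\Gamma$. Suppose there is a unitary $V\in\mathcal B(\ell^2(\Gamma))$ with $\mathcal P_\mu(V)=-V$. Then $\{T\in\mathcal B(\ell^2(\Gamma)):\mathcal P_\mu(T)=-T\}=\{AV: A\in\mathcal B(\ell^2(\Gamma)),\ \mathcal P_\mu(A)=A\}$.
   Context: $\rho$ denotes the right regular representation of $\Gamma$ on $\ell^2(\Gamma)$, $\rho_g\delta_x=\delta_{xg^{-1}}$, and $\mathcal P_\mu(T)=\sum_g\mu(g)\rho_gT\rho_g^*$ on $\mathcal B(\ell^2(\Gamma))$. $\mu$ symmetric: $\mu(g)=\mu(g^{-1})$; generating: its support generates $\Gamma$ as a group. *)

theory Defs
  imports "HOL-Analysis.Analysis"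
begin

text \<open>The group \<Gamma> is a type of class group_add (written additively, not necessarily
  commutative) that is countable.\<close>

definition ell2 :: "('g \<Rightarrow> complex) set" where
  "ell2 = {f. (\<lambda>x. (cmod (f x))\<^sup>2) summable_on UNIV}"

definition ell2_norm :: "('g \<Rightarrow> complex) \<Rightarrow> real" where
  "ell2_norm f = sqrt (infsum (\<lambda>x. (cmod (f x))\<^sup>2) UNIV)"

definition ell2_inner :: "('g \<Rightarrow> complex) \<Rightarrow> ('g \<Rightarrow> complex) \<Rightarrow> complex" where
  "ell2_inner f g = infsum (\<lambda>x. cnj (f x) * g x) UNIV"

text \<open>Bounded operators on \<ell>^2(\<Gamma>), represented by maps on all functions that are
  linear and bounded on \<ell>^2, map \<ell>^2 into \<ell>^2, and (canonical representative)
  vanish outside \<ell>^2.\<close>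

definition bounded_op :: "(('g \<Rightarrow> complex) \<Rightarrow> ('g \<Rightarrow> complex)) \<Rightarrow> bool" where
  "bounded_op T \<longleftrightarrow>
     (\<forall>f\<in>ell2. T f \<in> ell2) \<and>
     (\<forall>f\<in>ell2. \<forall>g\<in>ell2. \<forall>a b. T (\<lambda>x. a * f x + b * g x) = (\<lambda>x. a * T f x + b * T g x)) \<and>
     (\<exists>C. \<forall>f\<in>ell2. ell2_norm (T f) \<le> C * ell2_norm f) \<and>
     (\<forall>f. f \<notin> ell2 \<longrightarrow> T f = (\<lambda>x. 0))"

definition is_adjoint :: "(('g \<Rightarrow> complex) \<Rightarrow> ('g \<Rightarrow> complex)) \<Rightarrow> (('g \<Rightarrow> complex) \<Rightarrow> ('g \<Rightarrow> complex)) \<Rightarrow> bool" where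
  "is_adjoint T S \<longleftrightarrow> (\<forall>f\<in>ell2. \<forall>g\<in>ell2. ell2_inner (T f) g = ell2_inner f (S g))"

definition unitary_op :: "(('g \<Rightarrow> complex) \<Rightarrow> ('g \<Rightarrow> complex)) \<Rightarrow> bool" where
  "unitary_op V \<longleftrightarrow> bounded_op V \<and>
     (\<exists>W. bounded_op W \<and> is_adjoint V W \<and> (\<forall>f\<in>ell2. W (V f) = f \<and> V (W f) = f))"

text \<open>Right regular representation: \<rho>_g \<delta>_x = \<delta>_{x g^{-1}}, i.e. (\<rho>_g f)(y) = f(y g);
  its adjoint is \<rho>_{g^{-1}}, (\<rho>_g^* f)(y) = f(y g^{-1}).\<close>
definition rho :: "'g::group_add \<Rightarrow> ('g \<Rightarrow> complex) \<Rightarrow> ('g \<Rightarrow> complex)" where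
  "rho g f = (if f \<in> ell2 then (\<lambda>y. f (y + g)) else (\<lambda>y. 0))"

definition rho_adj :: "'g::group_add \<Rightarrow> ('g \<Rightarrow> complex) \<Rightarrow> ('g \<Rightarrow> complex)" where
  "rho_adj g f = (if f \<in> ell2 then (\<lambda>y. f (y - g)) else (\<lambda>y. 0))"

text \<open>The Markov operator P_\<mu>(T) = \<Sum>_g \<mu>(g) \<rho>_g T \<rho>_g^*; the series converges
  absolutely in operator norm, hence coordinatewise, which is how it is evaluated here.\<close>
definition markov_op :: "('g::group_add \<Rightarrow> real) \<Rightarrow> (('g \<Rightarrow> complex) \<Rightarrow> ('g \<Rightarrow> complex))
    \<Rightarrow> (('g \<Rightarrow> complex) \<Rightarrow> ('g \<Rightarrow> complex))" where
  "markov_op \<mu> T f = (if f \<in> ell2 then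
      (\<lambda>y. infsum (\<lambda>g. complex_of_real (\<mu> g) * rho g (T (rho_adj g f)) y) UNIV)
    else (\<lambda>y. 0))"

inductive_set gen_subgroup :: "'g::group_add set \<Rightarrow> 'g set" for S where
  zero: "0 \<in> gen_subgroup S"
| base: "s \<in> S \<Longrightarrow> s \<in> gen_subgroup S"
| add: "a \<in> gen_subgroup S \<Longrightarrow> b \<in> gen_subgroup S \<Longrightarrow> a + b \<in> gen_subgroup S"
| neg: "a \<in> gen_subgroup S \<Longrightarrow> - a \<in> gen_subgroup S"

definition prob_measure :: "('g \<Rightarrow> real) \<Rightarrow> bool" where
  "prob_measure \<mu> \<longleftrightarrow> (\<forall>g. 0 \<le> \<mu> g) \<and> (\<mu> has_sum 1) UNIV"

definition symmetric_measure :: "('g::group_add \<Rightarrow> real) \<Rightarrow> bool" where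
  "symmetric_measure \<mu> \<longleftrightarrow> (\<forall>g. \<mu> g = \<mu> (- g))"

definition generating_measure :: "('g::group_add \<Rightarrow> real) \<Rightarrow> bool" where
  "generating_measure \<mu> \<longleftrightarrow> gen_subgroup {g. \<mu> g \<noteq> 0} = UNIV"

end

theory Submission
  imports Defs
begin

text \<open>The hypothesis says \<open>-V f = \<Sum>\<^sub>g \<mu>(g) \<rho>\<^sub>g V \<rho>\<^sub>g\<^sup>* f\<close>, a convex combination of vectors
  whose norms equal \<open>\<parallel>V f\<parallel>\<close> since \<open>V\<close> is an isometry. By strict convexity of \<open>\<ell>\<^sup>2\<close> every term
  with \<open>\<mu>(g) > 0\<close> equals \<open>-V f\<close>, i.e. \<open>V\<close> anticommutes with \<open>\<rho>\<^sub>g\<^sup>*\<close>, and then so does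
  \<open>V\<^sup>* = V\<^sup>-\<^sup>1\<close>. For any such anticommuting \<open>S\<close> one has \<open>P\<^sub>\<mu>(T S) = -P\<^sub>\<mu>(T) S\<close>, so
  \<open>T \<mapsto> T V\<^sup>*\<close> and \<open>A \<mapsto> A V\<close> are mutually inverse maps between the two sets.\<close>

type_synonym 'g ell2_op = "('g \<Rightarrow> complex) \<Rightarrow> ('g \<Rightarrow> complex)"

lemma ell2_zero [simp]: "(\<lambda>x. 0) \<in> ell2"
  by (simp add: ell2_def)

lemma ell2_uminus_iff [simp]: "(\<lambda>y. - f y) \<in> ell2 \<longleftrightarrow> f \<in> ell2"
  by (simp add: ell2_def)

lemma bij_betw_translate: "bij_betw (\<lambda>y. y + g) UNIV (UNIV :: 'g::group_add set)"
  by (rule bij_betwI[where g="\<lambda>y. y - g"]) auto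

lemma ell2_translate: "f \<in> ell2 \<Longrightarrow> (\<lambda>y. f (y + (g::'g::group_add))) \<in> ell2"
  using summable_on_reindex_bij_betw[OF bij_betw_translate, of "\<lambda>y. (cmod (f y))\<^sup>2"]
  by (simp add: ell2_def)

definition ell2_norm_sq :: "('g \<Rightarrow> complex) \<Rightarrow> real" where
  "ell2_norm_sq f = (\<Sum>\<^sub>\<infinity>y. (cmod (f y))\<^sup>2)"

lemma ell2_norm_sq_nonneg: "0 \<le> ell2_norm_sq f"
  unfolding ell2_norm_sq_def by (simp add: infsum_nonneg)

lemma ell2_norm_sq_translate: "ell2_norm_sq (\<lambda>y. f (y + (g::'g::group_add))) = ell2_norm_sq f"
  unfolding ell2_norm_sq_def using infsum_reindex_bij_betw[OF bij_betw_translate] .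

lemma ell2_norm_sq_uminus [simp]: "ell2_norm_sq (\<lambda>y. - f y) = ell2_norm_sq f"
  by (simp add: ell2_norm_sq_def)

lemma ell2_norm_sq_eq_0D:
  assumes "f \<in> ell2" and "ell2_norm_sq f = 0"
  shows "f = (\<lambda>y. 0)"
proof
  fix y
  have "(cmod (f y))\<^sup>2 = 0"
    using assms by (intro nonneg_infsum_le_0D) (auto simp: ell2_def ell2_norm_sq_def)
  then show "f y = 0" by simp
qed

lemma rho_ell2: "f \<in> ell2 \<Longrightarrow> rho g f \<in> ell2"
  by (simp add: rho_def ell2_translate)

lemma rho_adj_ell2: "f \<in> ell2 \<Longrightarrow> rho_adj g f \<in> ell2"
  using ell2_translate[of f "- g"] by (simp add: rho_adj_def)

lemma rho_adj_rho: "f \<in> ell2 \<Longrightarrow> rho_adj g (rho g f) = f"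
  using rho_ell2[of f g] by (simp add: rho_def rho_adj_def)

lemma rho_zero [simp]: "rho g (\<lambda>y. 0) = (\<lambda>y. 0)"
  by (simp add: rho_def)

lemma rho_adj_zero [simp]: "rho_adj g (\<lambda>y. 0) = (\<lambda>y. 0)"
  by (simp add: rho_adj_def)

lemma rho_uminus: "rho g (\<lambda>y. - f y) = (\<lambda>y. - rho g f y)"
  by (auto simp: rho_def)

lemma rho_adj_uminus: "rho_adj g (\<lambda>y. - f y) = (\<lambda>y. - rho_adj g f y)"
  by (auto simp: rho_adj_def)

lemma ell2_norm_sq_rho: "f \<in> ell2 \<Longrightarrow> ell2_norm_sq (rho g f) = ell2_norm_sq f"
  by (simp add: rho_def ell2_norm_sq_translate)

lemma ell2_norm_sq_rho_adj: "f \<in> ell2 \<Longrightarrow> ell2_norm_sq (rho_adj g f) = ell2_norm_sq f"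
  using ell2_norm_sq_translate[of f "- g"] by (simp add: rho_adj_def)

lemma bounded_op_ell2: "bounded_op T \<Longrightarrow> f \<in> ell2 \<Longrightarrow> T f \<in> ell2"
  by (simp add: bounded_op_def)

lemma bounded_op_outside: "bounded_op T \<Longrightarrow> f \<notin> ell2 \<Longrightarrow> T f = (\<lambda>x. 0)"
  by (simp add: bounded_op_def)

lemma bounded_op_linear:
  "bounded_op T \<Longrightarrow> f \<in> ell2 \<Longrightarrow> h \<in> ell2
    \<Longrightarrow> T (\<lambda>x. a * f x + b * h x) = (\<lambda>x. a * T f x + b * T h x)"
  by (simp add: bounded_op_def)

lemma bounded_op_zero: "bounded_op T \<Longrightarrow> T (\<lambda>x. 0) = (\<lambda>x. 0)"
  using bounded_op_linear[of T "\<lambda>x. 0" "\<lambda>x. 0" 0 0] by simp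

lemma bounded_op_uminus:
  assumes "bounded_op T"
  shows "T (\<lambda>y. - f y) = (\<lambda>y. - T f y)"
proof (cases "f \<in> ell2")
  case True
  then show ?thesis using bounded_op_linear[OF assms True True, of "-1" 0] by simp
qed (simp add: assms bounded_op_outside)

lemma bounded_op_comp:
  assumes A: "bounded_op A" and B: "bounded_op B"
  shows "bounded_op (A \<circ> B)"
proof -
  obtain C1 where C1: "\<forall>f\<in>ell2. ell2_norm (A f) \<le> C1 * ell2_norm f"
    using A unfolding bounded_op_def by auto
  obtain C2 where C2: "\<forall>f\<in>ell2. ell2_norm (B f) \<le> C2 * ell2_norm f"
    using B unfolding bounded_op_def by auto
  have "ell2_norm (A (B f)) \<le> (max C1 0 * C2) * ell2_norm f" if f: "f \<in> ell2" for f
  proof -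
    have "ell2_norm (A (B f)) \<le> C1 * ell2_norm (B f)"
      using C1 bounded_op_ell2[OF B f] by blast
    also have "\<dots> \<le> max C1 0 * ell2_norm (B f)"
      by (rule mult_right_mono) (simp_all add: ell2_norm_def infsum_nonneg)
    also have "\<dots> \<le> max C1 0 * (C2 * ell2_norm f)"
      using C2 f by (simp add: mult_left_mono)
    finally show ?thesis by simp
  qed
  then show ?thesis
    using A B bounded_op_zero[OF A]
    unfolding bounded_op_def by (auto intro!: exI[of _ "max C1 0 * C2"])
qed

lemma cmod_mult_le_avg_sq: "cmod a * cmod b \<le> ((cmod a)\<^sup>2 + (cmod b)\<^sup>2) / 2"
  using sum_squares_bound[of "cmod a" "cmod b"] by (simp add: power2_eq_square)

lemma ell2_cmod_mult_summable:
  assumes "f \<in> ell2" and "h \<in> ell2"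
  shows "(\<lambda>y. cmod (f y) * cmod (h y)) summable_on UNIV"
    and "(\<Sum>\<^sub>\<infinity>y. cmod (f y) * cmod (h y)) \<le> (ell2_norm_sq f + ell2_norm_sq h) / 2"
proof -
  have "((\<lambda>y. (cmod (f y))\<^sup>2) has_sum ell2_norm_sq f) UNIV"
    and "((\<lambda>y. (cmod (h y))\<^sup>2) has_sum ell2_norm_sq h) UNIV"
    using assms by (auto simp: ell2_def ell2_norm_sq_def)
  then have avg: "((\<lambda>y. ((cmod (f y))\<^sup>2 + (cmod (h y))\<^sup>2) / 2)
      has_sum (ell2_norm_sq f + ell2_norm_sq h) / 2) UNIV"
    by (intro has_sum_divide_const has_sum_add)
  show s: "(\<lambda>y. cmod (f y) * cmod (h y)) summable_on UNIV"
    by (rule summable_on_comparison_test[OF has_sum_imp_summable[OF avg]])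
      (use cmod_mult_le_avg_sq in auto)
  show "(\<Sum>\<^sub>\<infinity>y. cmod (f y) * cmod (h y)) \<le> (ell2_norm_sq f + ell2_norm_sq h) / 2"
    by (rule has_sum_mono[OF has_sum_infsum[OF s] avg]) (rule cmod_mult_le_avg_sq)
qed

lemma ell2_inner_summable:
  assumes "f \<in> ell2" and "h \<in> ell2"
  shows "(\<lambda>y. cnj (f y) * h y) summable_on UNIV"
proof (rule abs_summable_summable)
  show "(\<lambda>y. norm (cnj (f y) * h y)) summable_on UNIV"
    using ell2_cmod_mult_summable(1)[OF assms] by (simp add: norm_mult)
qed

lemma ell2_inner_self:
  assumes "f \<in> ell2"
  shows "ell2_inner f f = of_real (ell2_norm_sq f)"
proof -
  have "((\<lambda>y. of_real ((cmod (f y))\<^sup>2) :: complex) has_sum of_real (ell2_norm_sq f)) UNIV"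
    using assms by (intro has_sum_of_real) (simp add: ell2_def ell2_norm_sq_def)
  moreover have "cnj (f y) * f y = of_real ((cmod (f y))\<^sup>2)" for y
    using complex_norm_square[of "f y"] by (simp add: mult.commute)
  ultimately show ?thesis
    unfolding ell2_inner_def by (simp add: infsumI)
qed

lemma ell2_norm_sq_diff:
  assumes f: "f \<in> ell2" and h: "h \<in> ell2"
  shows "(\<lambda>y. f y - h y) \<in> ell2"
    and "ell2_norm_sq (\<lambda>y. f y - h y) = ell2_norm_sq f + ell2_norm_sq h - 2 * Re (ell2_inner h f)"
proof -
  have pointwise: "(cmod (f y - h y))\<^sup>2
      = (cmod (f y))\<^sup>2 + (cmod (h y))\<^sup>2 + (-2) * Re (cnj (h y) * f y)" for y
    by (simp only: cmod_power2) (simp add: power2_eq_square algebra_simps)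
  have "((\<lambda>y. (cmod (f y))\<^sup>2) has_sum ell2_norm_sq f) UNIV"
    and "((\<lambda>y. (cmod (h y))\<^sup>2) has_sum ell2_norm_sq h) UNIV"
    using assms by (auto simp: ell2_def ell2_norm_sq_def)
  moreover have "((\<lambda>y. Re (cnj (h y) * f y)) has_sum Re (ell2_inner h f)) UNIV"
    unfolding ell2_inner_def by (intro has_sum_Re has_sum_infsum ell2_inner_summable h f)
  ultimately have "((\<lambda>y. (cmod (f y - h y))\<^sup>2)
      has_sum ell2_norm_sq f + ell2_norm_sq h + (-2) * Re (ell2_inner h f)) UNIV"
    unfolding pointwise by (intro has_sum_add has_sum_cmult_right)
  then show "(\<lambda>y. f y - h y) \<in> ell2"
    and "ell2_norm_sq (\<lambda>y. f y - h y) = ell2_norm_sq f + ell2_norm_sq h - 2 * Re (ell2_inner h f)"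
    by (auto simp: ell2_def ell2_norm_sq_def infsumI dest: has_sum_imp_summable)
qed

lemma ell2_inner_average:
  fixes \<mu> :: "'i \<Rightarrow> real" and h :: "'i \<Rightarrow> 'g \<Rightarrow> complex"
  assumes \<mu>_nonneg: "\<And>i. 0 \<le> \<mu> i" and \<mu>_summable: "\<mu> summable_on UNIV"
    and h: "\<And>i. h i \<in> ell2" and h_bounded: "\<And>i. ell2_norm_sq (h i) \<le> N"
    and v: "v \<in> ell2"
  shows "((\<lambda>i. of_real (\<mu> i) * ell2_inner v (h i))
           has_sum ell2_inner v (\<lambda>y. \<Sum>\<^sub>\<infinity>i. of_real (\<mu> i) * h i y)) UNIV"
proof -
  define F where "F i y = of_real (\<mu> i) * (cnj (v y) * h i y)" for i y
  define B where "B = (ell2_norm_sq v + N) / 2"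
  have norm_F: "norm (F i y) = \<mu> i * (cmod (v y) * cmod (h i y))" for i y
    unfolding F_def using \<mu>_nonneg[of i] by (simp add: norm_mult)
  have row_bound: "(\<Sum>\<^sub>\<infinity>y. norm (F i y)) \<le> \<mu> i * B" for i
  proof -
    have "(\<Sum>\<^sub>\<infinity>y. cmod (v y) * cmod (h i y)) \<le> B"
      using ell2_cmod_mult_summable(2)[OF v h[of i]] h_bounded[of i] unfolding B_def by force
    then show ?thesis
      unfolding norm_F infsum_cmult_right' using \<mu>_nonneg[of i] by (rule mult_left_mono)
  qed
  have "(\<lambda>y. norm (F i y)) summable_on UNIV" for i
    unfolding norm_F by (simp add: summable_on_cmult_right ell2_cmod_mult_summable(1)[OF v h[of i]])
  moreover have "(\<lambda>i. norm (\<Sum>\<^sub>\<infinity>y. norm (F i y))) summable_on UNIV"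
  proof (rule Infinite_Sum.abs_summable_on_comparison_test')
    show "(\<lambda>i. \<mu> i * B) summable_on UNIV" by (intro summable_on_cmult_left \<mu>_summable)
    show "norm (\<Sum>\<^sub>\<infinity>y. norm (F i y)) \<le> \<mu> i * B" for i
      using row_bound[of i] by (simp add: infsum_nonneg)
  qed
  ultimately have "(\<lambda>p. norm (F (fst p) (snd p))) summable_on UNIV \<times> UNIV"
    using Infinite_Sum.abs_summable_on_Sigma_iff[where f="\<lambda>p. F (fst p) (snd p)" and A=UNIV and B="\<lambda>_. UNIV"]
    by simp
  then have F_summable: "(\<lambda>(i, y). F i y) summable_on UNIV \<times> UNIV"
    by (simp add: case_prod_unfold abs_summable_summable)
  have rows: "(\<Sum>\<^sub>\<infinity>y. F i y) = of_real (\<mu> i) * ell2_inner v (h i)" for i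
    unfolding F_def ell2_inner_def by (rule infsum_cmult_right')
  have columns: "(\<Sum>\<^sub>\<infinity>i. F i y) = cnj (v y) * (\<Sum>\<^sub>\<infinity>i. of_real (\<mu> i) * h i y)" for y
    unfolding F_def by (simp add: infsum_cmult_right'[symmetric] algebra_simps)
  have "((\<lambda>i. \<Sum>\<^sub>\<infinity>y. F i y) has_sum (\<Sum>\<^sub>\<infinity>i. \<Sum>\<^sub>\<infinity>y. F i y)) UNIV"
    using summable_on_Sigma_banach[OF F_summable] by simp
  also have "(\<Sum>\<^sub>\<infinity>i. \<Sum>\<^sub>\<infinity>y. F i y) = (\<Sum>\<^sub>\<infinity>y. \<Sum>\<^sub>\<infinity>i. F i y)"
    by (rule infsum_swap_banach[OF F_summable])
  finally show ?thesis
    unfolding rows columns ell2_inner_def .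
qed

lemma ell2_average_extreme:
  fixes \<mu> :: "'i \<Rightarrow> real" and h :: "'i \<Rightarrow> 'g \<Rightarrow> complex"
  assumes \<mu>_nonneg: "\<And>i. 0 \<le> \<mu> i" and \<mu>_sum: "(\<mu> has_sum 1) UNIV"
    and h: "\<And>i. h i \<in> ell2" and h_bounded: "\<And>i. ell2_norm_sq (h i) \<le> ell2_norm_sq v"
    and v: "v \<in> ell2" and average: "\<And>y. (\<Sum>\<^sub>\<infinity>i. of_real (\<mu> i) * h i y) = v y"
    and "\<mu> j \<noteq> 0"
  shows "h j = v"
proof -
  define N where "N = ell2_norm_sq v"
  \<comment> \<open>\<open>\<mu>(i) \<parallel>h i - v\<parallel>\<^sup>2 \<le> D i\<close>, and \<open>\<Sum>\<^sub>i D i = 2N - 2 Re \<langle>v, \<Sum>\<^sub>i \<mu>(i) h i\<rangle> = 0\<close>.\<close>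
  define D where "D i = \<mu> i * (2 * N) + (-2) * (\<mu> i * Re (ell2_inner v (h i)))" for i
  have "((\<lambda>i. of_real (\<mu> i) * ell2_inner v (h i)) has_sum of_real N) UNIV"
    using ell2_inner_average[where h=h, OF \<mu>_nonneg has_sum_imp_summable[OF \<mu>_sum] h h_bounded v]
    unfolding average N_def ell2_inner_self[OF v] by simp
  then have "((\<lambda>i. \<mu> i * Re (ell2_inner v (h i))) has_sum N) UNIV"
    using has_sum_Re by fastforce
  then have "(D has_sum 1 * (2 * N) + (-2) * N) UNIV"
    unfolding D_def by (intro has_sum_add has_sum_cmult_left has_sum_cmult_right \<mu>_sum)
  then have D_sum: "(D has_sum 0) UNIV" by simp
  have dist_bound: "0 \<le> \<mu> i * ell2_norm_sq (\<lambda>y. h i y - v y) \<and> \<mu> i * ell2_norm_sq (\<lambda>y. h i y - v y) \<le> D i"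
    for i
  proof
    show "0 \<le> \<mu> i * ell2_norm_sq (\<lambda>y. h i y - v y)"
      by (intro mult_nonneg_nonneg \<mu>_nonneg ell2_norm_sq_nonneg)
    have "\<mu> i * ell2_norm_sq (\<lambda>y. h i y - v y) \<le> \<mu> i * (2 * N - 2 * Re (ell2_inner v (h i)))"
      using ell2_norm_sq_diff(2)[OF h v, of i] h_bounded[of i] unfolding N_def
      by (intro mult_left_mono \<mu>_nonneg) simp
    then show "\<mu> i * ell2_norm_sq (\<lambda>y. h i y - v y) \<le> D i"
      unfolding D_def by (simp add: algebra_simps)
  qed
  have "D j = 0"
    by (rule nonneg_has_sum_le_0D[OF D_sum]) (use dist_bound order_trans in auto)
  moreover have "0 < \<mu> j"
    using \<mu>_nonneg[of j] \<open>\<mu> j \<noteq> 0\<close> by simp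
  ultimately have "ell2_norm_sq (\<lambda>y. h j y - v y) = 0"
    using dist_bound[of j] by (simp add: zero_le_mult_iff mult_le_0_iff)
  then show ?thesis
    using ell2_norm_sq_eq_0D[OF ell2_norm_sq_diff(1)[OF h v]] by (simp add: fun_eq_iff)
qed

lemma ell2_norm_sq_left_inverse_adjoint:
  assumes "bounded_op V" and "is_adjoint V W" and "\<forall>f\<in>ell2. W (V f) = f" and f: "f \<in> ell2"
  shows "ell2_norm_sq (V f) = ell2_norm_sq f"
proof -
  have Vf: "V f \<in> ell2" using assms(1) f by (rule bounded_op_ell2)
  have "ell2_inner (V f) (V f) = ell2_inner f (W (V f))"
    using assms(2) f Vf unfolding is_adjoint_def by blast
  also have "\<dots> = ell2_inner f f" using assms(3) f by simp
  finally show ?thesis by (simp add: ell2_inner_self f Vf)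
qed

definition rho_anticommuting :: "('g::group_add \<Rightarrow> real) \<Rightarrow> 'g ell2_op \<Rightarrow> bool" where
  "rho_anticommuting \<mu> S \<longleftrightarrow>
     (\<forall>g f. \<mu> g \<noteq> 0 \<longrightarrow> f \<in> ell2 \<longrightarrow> S (rho_adj g f) = (\<lambda>y. - rho_adj g (S f) y))"

lemma markov_op_neg_fixed_unitary_anticommuting:
  fixes \<mu> :: "'g::group_add \<Rightarrow> real"
  assumes \<mu>: "prob_measure \<mu>" and "unitary_op V" and V_neg: "markov_op \<mu> V = (\<lambda>f y. - V f y)"
  shows "rho_anticommuting \<mu> V"
  unfolding rho_anticommuting_def
proof (intro allI impI)
  fix g and f :: "'g \<Rightarrow> complex" assume "\<mu> g \<noteq> 0" and f: "f \<in> ell2"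
  obtain W where bV: "bounded_op V" and adj: "is_adjoint V W" and inv: "\<forall>f\<in>ell2. W (V f) = f"
    using \<open>unitary_op V\<close> unfolding unitary_op_def by blast
  note norm_V = ell2_norm_sq_left_inverse_adjoint[OF bV adj inv]
  define h where "h i = rho i (V (rho_adj i f))" for i
  have h: "h i \<in> ell2" for i
    unfolding h_def by (intro rho_ell2 bounded_op_ell2[OF bV] rho_adj_ell2 f)
  have "ell2_norm_sq (h i) = ell2_norm_sq (\<lambda>y. - V f y)" for i
    unfolding h_def using f
    by (simp add: ell2_norm_sq_rho bounded_op_ell2[OF bV] rho_adj_ell2 norm_V ell2_norm_sq_rho_adj)
  moreover have "(\<Sum>\<^sub>\<infinity>i. of_real (\<mu> i) * h i y) = - V f y" for y
    using fun_cong[OF fun_cong[OF V_neg, of f], of y] f unfolding markov_op_def h_def by simp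
  ultimately have "h g = (\<lambda>y. - V f y)"
    using \<mu> \<open>\<mu> g \<noteq> 0\<close> h bounded_op_ell2[OF bV f]
    by (intro ell2_average_extreme[where \<mu>=\<mu>]) (auto simp: prob_measure_def)
  then have "rho_adj g (h g) = rho_adj g (\<lambda>y. - V f y)" by simp
  then show "V (rho_adj g f) = (\<lambda>y. - rho_adj g (V f) y)"
    unfolding h_def using f
    by (simp add: rho_adj_rho bounded_op_ell2[OF bV] rho_adj_ell2 rho_adj_uminus)
qed

lemma rho_anticommuting_inverse:
  fixes \<mu> :: "'g::group_add \<Rightarrow> real"
  assumes "rho_anticommuting \<mu> V" and "bounded_op W" and inv: "\<forall>f\<in>ell2. W (V f) = f \<and> V (W f) = f"
  shows "rho_anticommuting \<mu> W"
  unfolding rho_anticommuting_def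
proof (intro allI impI)
  fix g and f :: "'g \<Rightarrow> complex" assume "\<mu> g \<noteq> 0" and f: "f \<in> ell2"
  have Wf: "W f \<in> ell2" using \<open>bounded_op W\<close> f by (rule bounded_op_ell2)
  have "V (rho_adj g (W f)) = (\<lambda>y. - rho_adj g f y)"
    using assms(1) \<open>\<mu> g \<noteq> 0\<close> Wf inv f unfolding rho_anticommuting_def by simp
  then have "rho_adj g (W f) = W (\<lambda>y. - rho_adj g f y)"
    using inv rho_adj_ell2[OF Wf] by metis
  then show "W (rho_adj g f) = (\<lambda>y. - rho_adj g (W f) y)"
    by (simp add: bounded_op_uminus[OF \<open>bounded_op W\<close>])
qed

lemma markov_op_comp_rho_anticommuting:
  fixes \<mu> :: "'g::group_add \<Rightarrow> real"
  assumes "rho_anticommuting \<mu> S" and S: "bounded_op S" and T: "bounded_op T"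
  shows "markov_op \<mu> (T \<circ> S) = (\<lambda>f y. - markov_op \<mu> T (S f) y)"
proof (intro ext)
  fix f y
  show "markov_op \<mu> (T \<circ> S) f y = - markov_op \<mu> T (S f) y"
  proof (cases "f \<in> ell2")
    case True
    have "of_real (\<mu> g) * rho g (T (S (rho_adj g f))) y
        = - (of_real (\<mu> g) * rho g (T (rho_adj g (S f))) y)" for g
      using assms(1) True
      by (cases "\<mu> g = 0")
        (simp_all add: rho_anticommuting_def bounded_op_uminus[OF T] rho_uminus)
    then show ?thesis
      using True bounded_op_ell2[OF S True]
      by (simp add: markov_op_def infsum_uminus[symmetric])
  next
    case False
    then show ?thesis
      by (simp add: markov_op_def bounded_op_outside[OF S] bounded_op_zero[OF T])
  qed
qed

theorem proposition3p5:
  fixes \<mu> :: "'g::{group_add, countable} \<Rightarrow> real"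
    and V :: "('g \<Rightarrow> complex) \<Rightarrow> ('g \<Rightarrow> complex)"
  assumes "prob_measure \<mu>" and "symmetric_measure \<mu>" and "generating_measure \<mu>"
    and "unitary_op V"
    and "markov_op \<mu> V = (\<lambda>f y. - V f y)"
  shows "{T. bounded_op T \<and> markov_op \<mu> T = (\<lambda>f y. - T f y)}
       = {A \<circ> V | A. bounded_op A \<and> markov_op \<mu> A = A}"
proof -
  obtain W where V: "bounded_op V" and W: "bounded_op W"
    and inv: "\<forall>f\<in>ell2. W (V f) = f \<and> V (W f) = f"
    using \<open>unitary_op V\<close> unfolding unitary_op_def by blast
  have V_anti: "rho_anticommuting \<mu> V"
    using assms(1,4,5) by (rule markov_op_neg_fixed_unitary_anticommuting)
  then have W_anti: "rho_anticommuting \<mu> W"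
    using W inv by (rule rho_anticommuting_inverse)
  show ?thesis
  proof (intro equalityI subsetI)
    fix T assume "T \<in> {T. bounded_op T \<and> markov_op \<mu> T = (\<lambda>f y. - T f y)}"
    then have T: "bounded_op T" and T_neg: "markov_op \<mu> T = (\<lambda>f y. - T f y)" by auto
    have "T = (T \<circ> W) \<circ> V"
      using inv bounded_op_outside[OF T] bounded_op_outside[OF V] bounded_op_zero[OF W]
        bounded_op_zero[OF T]
      by (intro ext) (metis comp_apply)
    moreover have "markov_op \<mu> (T \<circ> W) = T \<circ> W"
      using markov_op_comp_rho_anticommuting[OF W_anti W T] T_neg by (simp add: fun_eq_iff)
    ultimately show "T \<in> {A \<circ> V | A. bounded_op A \<and> markov_op \<mu> A = A}"
      using bounded_op_comp[OF T W] by blast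
  next
    fix T assume "T \<in> {A \<circ> V | A. bounded_op A \<and> markov_op \<mu> A = A}"
    then obtain A where "T = A \<circ> V" and A: "bounded_op A" and A_fixed: "markov_op \<mu> A = A"
      by auto
    then show "T \<in> {T. bounded_op T \<and> markov_op \<mu> T = (\<lambda>f y. - T f y)}"
      using bounded_op_comp[OF A V] markov_op_comp_rho_anticommuting[OF V_anti V A] by simp
  qed
qed

end
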